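(* Let $k\ge 1$. A graph $F$ has a path decomposition of width at most $k$ if and only if $F$ has a $k$-simplicial walk that is decomposing in $F$.
   Context: Graphs are finite and undirected. A path decomposition of $F$ is a path $P$ with bags $\beta(t)\subseteq V(F)$, $t\in V(P)$, such that every edge of $F$ is contained in some bag and for every $v\in V(F)$ the set of nodes whose bags contain $v$ induces a nonempty connected subpath; its width is $\max_t|\beta(t)|-1$. A $k$-simplicial walk of length $t$ in $F$ is a sequence $(\sigma_1,\dots,\sigma_t)$ of nonempty subsets of $V(F)$ of size at most $k+1$ with $|\sigma_1|=1$ such that for each $i\in[t-1]$ there is a vertex $u$ with $\sigma_{i+1}=\sigma_i\sqcup\{u\}$ ($u$ is incoming at step $i+1$) or $\sigma_i=\sigma_{i+1}\sqcup\{u\}$ ($u$ is outgoing); the vertex of $\sigma_1$ counts as incoming at step 1. It is decomposing in $F$ if (D1) every vertex of $F$ is incoming exactly once, and (D2) every edge $uv\in E(F)$ is contained in at least one $\sigma_i$. *)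

theory Defs
  imports Main
begin

definition graph :: "'a set \<Rightarrow> 'a set set \<Rightarrow> bool" where
  "graph V E \<longleftrightarrow> finite V \<and> (\<forall>e\<in>E. e \<subseteq> V \<and> card e = 2)"

definition path_decomposition :: "'a set \<Rightarrow> 'a set set \<Rightarrow> 'a set list \<Rightarrow> bool" where
  "path_decomposition V E bs \<longleftrightarrow>
     bs \<noteq> [] \<and>
     (\<forall>t<length bs. bs ! t \<subseteq> V) \<and>
     (\<forall>e\<in>E. \<exists>t<length bs. e \<subseteq> bs ! t) \<and>
     (\<forall>v\<in>V. (\<exists>t<length bs. v \<in> bs ! t) \<and>
        (\<forall>s t u. s \<le> t \<and> t \<le> u \<and> u < length bs \<and> v \<in> bs ! s \<and> v \<in> bs ! u \<longrightarrow> v \<in> bs ! t))"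

definition has_path_decomposition_of_width_le :: "'a set \<Rightarrow> 'a set set \<Rightarrow> nat \<Rightarrow> bool" where
  "has_path_decomposition_of_width_le V E k \<longleftrightarrow>
     (\<exists>bs. path_decomposition V E bs \<and> (\<forall>t<length bs. card (bs ! t) \<le> k + 1))"

text \<open>A k-simplicial walk in the graph with vertex set V: sigma_1, ..., sigma_t is the list ss
  (0-indexed), of length t >= 1.\<close>
definition simplicial_walk :: "'a set \<Rightarrow> nat \<Rightarrow> 'a set list \<Rightarrow> bool" where
  "simplicial_walk V k ss \<longleftrightarrow>
     ss \<noteq> [] \<and>
     (\<forall>i<length ss. ss ! i \<noteq> {} \<and> ss ! i \<subseteq> V \<and> finite (ss ! i) \<and> card (ss ! i) \<le> k + 1) \<and>
     card (ss ! 0) = 1 \<and>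
     (\<forall>i. Suc i < length ss \<longrightarrow>
        (\<exists>u. (u \<notin> ss ! i \<and> ss ! Suc i = insert u (ss ! i)) \<or>
             (u \<notin> ss ! Suc i \<and> ss ! i = insert u (ss ! Suc i))))"

definition incoming :: "'a set list \<Rightarrow> nat \<Rightarrow> 'a \<Rightarrow> bool" where
  "incoming ss i v \<longleftrightarrow>
     (i = 0 \<and> ss \<noteq> [] \<and> ss ! 0 = {v}) \<or>
     (0 < i \<and> i < length ss \<and> v \<notin> ss ! (i - 1) \<and> ss ! i = insert v (ss ! (i - 1)))"

definition decomposing :: "'a set \<Rightarrow> 'a set set \<Rightarrow> 'a set list \<Rightarrow> bool" where
  "decomposing V E ss \<longleftrightarrow>
     (\<forall>v\<in>V. card {i. i < length ss \<and> incoming ss i v} = 1) \<and>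
     (\<forall>e\<in>E. \<exists>i<length ss. e \<subseteq> ss ! i)"

end

theory Submission
  imports Defs
begin

(* A decomposing walk is itself a path decomposition: a vertex whose simplices formed two separate
   blocks would be incoming at the start of each block, so being incoming exactly once forces its
   simplices to be consecutive.
   Conversely, walk along a path decomposition from bag to bag, skipping empty bags: pass from B to C
   by deleting the vertices of B - C one at a time and then adding those of C - B, and if B and C are
   disjoint, route through {x}, {x, y}, {y} with x in B and y in C, which needs k >= 1. Starting from
   a singleton in the first bag, every simplex lies in a bag or has at most two vertices, and every
   vertex still occupies a contiguous block of simplices, so it is incoming exactly once. *)

definition elementary_step :: "'a set \<Rightarrow> 'a set \<Rightarrow> bool" where
  "elementary_step X Y \<longleftrightarrow> (\<exists>u. u \<notin> X \<and> Y = insert u X) \<or> (\<exists>u. u \<notin> Y \<and> X = insert u Y)"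

definition walk_between :: "'a set \<Rightarrow> 'a set \<Rightarrow> 'a set list \<Rightarrow> bool" where
  "walk_between A B xs \<longleftrightarrow> xs \<noteq> [] \<and> hd xs = A \<and> last xs = B \<and> successively elementary_step xs"

definition contiguous :: "'a set list \<Rightarrow> 'a \<Rightarrow> bool" where
  "contiguous xs v \<longleftrightarrow>
     (\<forall>s t u. s \<le> t \<and> t \<le> u \<and> u < length xs \<and> v \<in> xs ! s \<and> v \<in> xs ! u \<longrightarrow> v \<in> xs ! t)"

lemma elementary_step_sym: "elementary_step X Y \<longleftrightarrow> elementary_step Y X"
  unfolding elementary_step_def by blast

lemma contiguous_Nil [simp]: "contiguous [] v"
  by (simp add: contiguous_def)

lemma contiguous_Cons [simp]:
  "contiguous (X # xs) v \<longleftrightarrow> contiguous xs v \<and> (v \<in> X \<and> v \<in> \<Union>(set xs) \<longrightarrow> v \<in> hd xs)"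
proof
  assume c: "contiguous (X # xs) v"
  have "contiguous xs v"
    unfolding contiguous_def
  proof (intro allI impI)
    fix s t u assume "s \<le> t \<and> t \<le> u \<and> u < length xs \<and> v \<in> xs ! s \<and> v \<in> xs ! u"
    then show "v \<in> xs ! t"
      using c[unfolded contiguous_def, rule_format, of "Suc s" "Suc t" "Suc u"] by simp
  qed
  moreover have "v \<in> hd xs" if "v \<in> X" "v \<in> xs ! u" "u < length xs" for u
    using c[unfolded contiguous_def, rule_format, of 0 1 "Suc u"] that by (cases xs) auto
  ultimately show "contiguous xs v \<and> (v \<in> X \<and> v \<in> \<Union>(set xs) \<longrightarrow> v \<in> hd xs)"
    by (auto simp: in_set_conv_nth)
next
  assume c: "contiguous xs v \<and> (v \<in> X \<and> v \<in> \<Union>(set xs) \<longrightarrow> v \<in> hd xs)"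
  show "contiguous (X # xs) v"
    unfolding contiguous_def
  proof (intro allI impI)
    fix s t u assume stu: "s \<le> t \<and> t \<le> u \<and> u < length (X # xs) \<and> v \<in> (X # xs) ! s \<and> v \<in> (X # xs) ! u"
    show "v \<in> (X # xs) ! t"
    proof (cases t)
      case 0
      with stu show ?thesis by auto
    next
      case (Suc t')
      then obtain u' where u: "u = Suc u'" using stu by (cases u) auto
      have "v \<in> xs ! s'" if "s = Suc s'" for s'
        using that stu by simp
      moreover have "v \<in> xs ! 0" if "s = 0"
      proof -
        have u': "u' < length xs" "v \<in> xs ! u'" using stu u by simp_all
        then have "v \<in> \<Union>(set xs)" "xs \<noteq> []" using nth_mem by auto
        moreover have "v \<in> X" using that stu by simp
        ultimately show ?thesis using c by (simp add: hd_conv_nth)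
      qed
      ultimately obtain s' where "s' \<le> t'" "v \<in> xs ! s'"
        using stu Suc by (cases s) auto
      moreover have "t' \<le> u'" "u' < length xs" "v \<in> xs ! u'" using stu Suc u by simp_all
      ultimately have "v \<in> xs ! t'"
        using c[THEN conjunct1, unfolded contiguous_def, rule_format, of s' t' u'] by blast
      then show ?thesis using Suc by simp
    qed
  qed
qed

lemma contiguous_append:
  "contiguous (xs @ ys) v \<longleftrightarrow> contiguous xs v \<and> contiguous ys v \<and>
     (v \<in> \<Union>(set xs) \<and> v \<in> \<Union>(set ys) \<longrightarrow> v \<in> last xs \<and> v \<in> hd ys)"
proof (induction xs)
  case (Cons X xs)
  show ?case
  proof (cases "xs = []")
    case False
    have "v \<in> hd xs \<Longrightarrow> v \<in> \<Union>(set xs)" "v \<in> last xs \<Longrightarrow> v \<in> \<Union>(set xs)"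
      using False by (meson UnionI hd_in_set last_in_set)+
    moreover have "contiguous ((X # xs) @ ys) v \<longleftrightarrow>
        contiguous (xs @ ys) v \<and> (v \<in> X \<and> (v \<in> \<Union>(set xs) \<or> v \<in> \<Union>(set ys)) \<longrightarrow> v \<in> hd xs)"
      using False by simp
    moreover have "contiguous (X # xs) v \<longleftrightarrow> contiguous xs v \<and> (v \<in> X \<and> v \<in> \<Union>(set xs) \<longrightarrow> v \<in> hd xs)"
      by simp
    moreover have "v \<in> \<Union>(set (X # xs)) \<longleftrightarrow> v \<in> X \<or> v \<in> \<Union>(set xs)" "last (X # xs) = last xs"
      using False by simp_all
    ultimately show ?thesis using Cons.IH by blast
  qed auto
qed simp

lemma contiguous_append_tl:
  assumes "contiguous xs v" "contiguous ys v" "ys \<noteq> []" "last xs = hd ys"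
    and "v \<in> \<Union>(set xs) \<and> v \<in> \<Union>(set ys) \<longrightarrow> v \<in> hd ys"
  shows "contiguous (xs @ tl ys) v"
proof -
  obtain Y ys' where ys: "ys = Y # ys'" using assms(3) by (cases ys) auto
  show ?thesis using assms unfolding ys contiguous_append by auto
qed

lemma contiguous_if_sorted_subset: "sorted_wrt (\<subseteq>) xs \<Longrightarrow> contiguous xs v"
proof (induction xs)
  case (Cons X xs)
  then show ?case by (cases xs) auto
qed simp

lemma contiguous_if_sorted_supset: "sorted_wrt (\<supseteq>) xs \<Longrightarrow> contiguous xs v"
proof (induction xs)
  case (Cons X xs)
  then show ?case by (cases xs) auto
qed simp

lemma contiguous_if_not_mem: "v \<notin> \<Union>(set xs) \<Longrightarrow> contiguous xs v"
  unfolding contiguous_def by (meson UnionI nth_mem)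

lemma walk_between_append_tl:
  assumes "walk_between A B xs" "walk_between B C ys"
  shows "walk_between A C (xs @ tl ys)"
proof -
  obtain ys' where ys: "ys = B # ys'" using assms(2) unfolding walk_between_def by (cases ys) auto
  show ?thesis using assms unfolding ys walk_between_def
    by (cases "ys' = []") (auto simp: successively_append_iff successively_Cons)
qed

lemma set_append_tl: "xs \<noteq> [] \<Longrightarrow> ys \<noteq> [] \<Longrightarrow> last xs = hd ys \<Longrightarrow> set (xs @ tl ys) = set xs \<union> set ys"
  by (cases ys) auto

lemma walk_between_rev: "walk_between A B xs \<Longrightarrow> walk_between B A (rev xs)"
  unfolding walk_between_def by (auto simp: hd_rev last_rev elementary_step_sym)

lemma increasing_walk:
  assumes "A \<subseteq> B" "finite (B - A)"
  shows "\<exists>xs. walk_between A B xs \<and> sorted_wrt (\<subseteq>) xs \<and> (\<forall>X\<in>set xs. A \<subseteq> X \<and> X \<subseteq> B)"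
proof -
  have "\<exists>xs. walk_between A (A \<union> D) xs \<and> sorted_wrt (\<subseteq>) xs \<and> (\<forall>X\<in>set xs. A \<subseteq> X \<and> X \<subseteq> A \<union> D)"
    if "finite D" for D
    using that
  proof (induction D rule: finite_induct)
    case empty
    show ?case by (rule exI[of _ "[A]"]) (simp add: walk_between_def)
  next
    case (insert d D)
    then obtain xs where xs: "walk_between A (A \<union> D) xs" "sorted_wrt (\<subseteq>) xs"
      "\<forall>X\<in>set xs. A \<subseteq> X \<and> X \<subseteq> A \<union> D" by blast
    show ?case
    proof (cases "d \<in> A")
      case True
      then have "A \<union> insert d D = A \<union> D" by blast
      then show ?thesis using xs by auto
    next
      case False
      have "elementary_step (A \<union> D) (A \<union> insert d D)"
        unfolding elementary_step_def using False insert.hyps(2) by auto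
      then show ?thesis using xs
        by (intro exI[of _ "xs @ [A \<union> insert d D]"])
          (auto simp: walk_between_def successively_append_iff sorted_wrt_append)
    qed
  qed
  moreover have "A \<union> (B - A) = B" using assms(1) by blast
  ultimately show ?thesis using assms(2) by metis
qed

lemma walk_through_intersection:
  assumes "finite A" "finite B"
  shows "\<exists>xs. walk_between A B xs \<and> (\<forall>X\<in>set xs. A \<inter> B \<subseteq> X \<and> (X \<subseteq> A \<or> X \<subseteq> B)) \<and>
    (\<forall>v. contiguous xs v)"
proof -
  obtain down where down: "walk_between (A \<inter> B) A down" "sorted_wrt (\<subseteq>) down"
      "\<forall>X\<in>set down. A \<inter> B \<subseteq> X \<and> X \<subseteq> A"
    using increasing_walk[of "A \<inter> B" A] assms by auto
  obtain up where up: "walk_between (A \<inter> B) B up" "sorted_wrt (\<subseteq>) up"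
      "\<forall>X\<in>set up. A \<inter> B \<subseteq> X \<and> X \<subseteq> B"
    using increasing_walk[of "A \<inter> B" B] assms by auto
  let ?xs = "rev down @ tl up"
  have ne: "rev down \<noteq> []" "up \<noteq> []" and junction: "last (rev down) = hd up" "hd up = A \<inter> B"
    using down(1) up(1) by (simp_all add: walk_between_def last_rev)
  have "walk_between A B ?xs"
    using walk_between_append_tl[OF walk_between_rev[OF down(1)] up(1)] .
  moreover have "\<forall>X\<in>set ?xs. A \<inter> B \<subseteq> X \<and> (X \<subseteq> A \<or> X \<subseteq> B)"
    using set_append_tl[OF ne junction(1)] down(3) up(3) by auto
  moreover have "contiguous ?xs v" for v
  proof (rule contiguous_append_tl[OF _ _ ne(2) junction(1)])
    show "contiguous (rev down) v"
      using down(2) by (intro contiguous_if_sorted_supset) (simp add: sorted_wrt_rev)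
    show "contiguous up v" using up(2) by (rule contiguous_if_sorted_subset)
    show "v \<in> \<Union>(set (rev down)) \<and> v \<in> \<Union>(set up) \<longrightarrow> v \<in> hd up"
      using down(3) up(3) junction(2) by auto
  qed
  ultimately show ?thesis by blast
qed

lemma walk_through_waypoints:
  assumes "ws \<noteq> []" "\<forall>W\<in>set ws. finite W" "\<forall>v. contiguous ws v"
    and "successively (\<lambda>W W'. W \<inter> W' \<noteq> {}) ws" "{} \<notin> set ws"
  shows "\<exists>ss. walk_between (hd ws) (last ws) ss \<and> set ws \<subseteq> set ss \<and> (\<forall>v. contiguous ss v) \<and>
    (\<forall>X\<in>set ss. X \<noteq> {} \<and> (\<exists>W\<in>set ws. X \<subseteq> W))"
  using assms
proof (induction ws rule: list_nonempty_induct)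
  case (single W)
  then show ?case by (intro exI[of _ "[W]"]) (auto simp: walk_between_def)
next
  case (cons W ws)
  have tail: "\<forall>W\<in>set ws. finite W" "\<forall>v. contiguous ws v" "successively (\<lambda>W W'. W \<inter> W' \<noteq> {}) ws"
      "{} \<notin> set ws"
    using cons.prems cons.hyps by (simp_all add: successively_Cons)
  obtain ss where ss: "walk_between (hd ws) (last ws) ss" "set ws \<subseteq> set ss"
      "\<forall>v. contiguous ss v" "\<forall>X\<in>set ss. X \<noteq> {} \<and> (\<exists>W\<in>set ws. X \<subseteq> W)"
    using cons.IH[OF tail] by blast
  have meet: "W \<inter> hd ws \<noteq> {}" and hd_in: "hd ws \<in> set ws"
    using cons.prems(3) cons.hyps by (auto simp: successively_Cons)
  have finite: "finite W" "finite (hd ws)" using cons.prems(1) hd_in by simp_all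
  obtain xs where xs: "walk_between W (hd ws) xs"
      "\<forall>X\<in>set xs. W \<inter> hd ws \<subseteq> X \<and> (X \<subseteq> W \<or> X \<subseteq> hd ws)" "\<forall>v. contiguous xs v"
    using walk_through_intersection[OF finite] by blast
  have ne: "xs \<noteq> []" "ss \<noteq> []" and junction: "last xs = hd ss" "hd xs = W"
    using xs(1) ss(1) by (simp_all add: walk_between_def)
  show ?case
  proof (intro exI[of _ "xs @ tl ss"] conjI allI ballI)
    show "walk_between (hd (W # ws)) (last (W # ws)) (xs @ tl ss)"
      using walk_between_append_tl[OF xs(1) ss(1)] cons.hyps by simp
    show "set (W # ws) \<subseteq> set (xs @ tl ss)"
      using set_append_tl[OF ne junction(1)] ss(2) junction(2) ne(1) by auto
  next
    fix X assume "X \<in> set (xs @ tl ss)"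
    then have "X \<in> set xs \<or> X \<in> set ss" using set_append_tl[OF ne junction(1)] by blast
    then show "X \<noteq> {}" "\<exists>W'\<in>set (W # ws). X \<subseteq> W'"
      using xs(2) ss(4) meet hd_in by auto
  next
    fix v
    have "v \<in> hd ss" if "v \<in> \<Union>(set xs)" "v \<in> \<Union>(set ss)"
    proof -
      have "v \<in> W \<or> v \<in> hd ws" "v \<in> \<Union>(set ws)" using that xs(2) ss(4) by blast+
      then have "v \<in> hd ws" using cons.prems(2)[rule_format, of v] by auto
      then show ?thesis using ss(1) by (simp add: walk_between_def)
    qed
    then show "contiguous (xs @ tl ss) v"
      using contiguous_append_tl[OF xs(3)[rule_format] ss(3)[rule_format] ne(2) junction(1)] by blast
  qed
qed

(* ws refines the bag sequence bs into one whose consecutive sets meet. The last clause, rather than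
   contiguity in ws (its instance A = {}), is what survives putting a new bag in front of bs. *)
definition waypoints_for :: "'a set list \<Rightarrow> 'a set list \<Rightarrow> bool" where
  "waypoints_for bs ws \<longleftrightarrow>
     successively (\<lambda>W W'. W \<inter> W' \<noteq> {}) ws \<and> set bs - {{}} \<subseteq> set ws \<and> \<Union>(set ws) \<subseteq> \<Union>(set bs) \<and>
     (\<forall>W\<in>set ws. W \<noteq> {} \<and> finite W \<and> (W \<in> set bs \<or> card W \<le> 2)) \<and>
     (\<forall>A v. contiguous (A # bs) v \<longrightarrow> contiguous (A # ws) v)"

lemma waypoints_forI:
  assumes "successively (\<lambda>W W'. W \<inter> W' \<noteq> {}) ws" "set bs - {{}} \<subseteq> set ws" "\<Union>(set ws) \<subseteq> \<Union>(set bs)"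
    "\<forall>W\<in>set ws. W \<noteq> {} \<and> finite W \<and> (W \<in> set bs \<or> card W \<le> 2)"
    "\<And>A v. contiguous (A # bs) v \<Longrightarrow> contiguous (A # ws) v"
  shows "waypoints_for bs ws"
  unfolding waypoints_for_def by (intro conjI allI impI assms(1-4)) (rule assms(5))

lemma waypoints_forD:
  assumes "waypoints_for bs ws"
  shows "successively (\<lambda>W W'. W \<inter> W' \<noteq> {}) ws" "set bs - {{}} \<subseteq> set ws" "\<Union>(set ws) \<subseteq> \<Union>(set bs)"
    "\<forall>W\<in>set ws. W \<noteq> {} \<and> finite W \<and> (W \<in> set bs \<or> card W \<le> 2)"
    "contiguous (A # bs) v \<Longrightarrow> contiguous (A # ws) v"
proof -
  show "successively (\<lambda>W W'. W \<inter> W' \<noteq> {}) ws" "set bs - {{}} \<subseteq> set ws" "\<Union>(set ws) \<subseteq> \<Union>(set bs)"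
    "\<forall>W\<in>set ws. W \<noteq> {} \<and> finite W \<and> (W \<in> set bs \<or> card W \<le> 2)"
    using assms by (simp_all add: waypoints_for_def)
  have "\<forall>A v. contiguous (A # bs) v \<longrightarrow> contiguous (A # ws) v"
    using assms unfolding waypoints_for_def by (elim conjE)
  then show "contiguous (A # bs) v \<Longrightarrow> contiguous (A # ws) v" by blast
qed

lemma waypoints_for_Nil: "waypoints_for [] []"
  by (rule waypoints_forI) simp_all

lemma waypoints_for_Cons_empty:
  assumes "waypoints_for bs ws"
  shows "waypoints_for ({} # bs) ws"
proof (rule waypoints_forI)
  fix A v assume "contiguous (A # {} # bs) v"
  then have "contiguous (A # bs) v" by (auto simp: hd_conv_nth)
  then show "contiguous (A # ws) v" by (rule waypoints_forD(5)[OF assms])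
qed (use waypoints_forD(1-4)[OF assms] in auto)

lemma waypoints_for_Cons:
  assumes "waypoints_for bs ws" "finite B" "B \<noteq> {}" "ws = [] \<or> B \<inter> hd ws \<noteq> {}"
  shows "waypoints_for (B # bs) (B # ws)"
proof (rule waypoints_forI)
  note ws = waypoints_forD[OF assms(1)]
  fix A v assume c: "contiguous (A # B # bs) v"
  then have "contiguous (B # bs) v" by simp
  then have "contiguous (B # ws) v" by (rule ws(5))
  then show "contiguous (A # B # ws) v" using c ws(3) by auto
qed (use assms waypoints_forD(1-4)[OF assms(1)] in \<open>auto simp: successively_Cons\<close>)

lemma contiguous_bridge:
  assumes "contiguous (B # ws) v" "x \<in> B" "y \<in> hd ws" "B \<inter> hd ws = {}"
  shows "contiguous (B # {x} # {x, y} # {y} # ws) v"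
proof -
  have "contiguous ws v" "v \<in> B \<Longrightarrow> v \<in> \<Union>(set ws) \<Longrightarrow> v \<in> hd ws"
    using assms(1) by simp_all
  moreover have "x \<notin> hd ws" "x \<noteq> y" using assms(2-4) by auto
  ultimately show ?thesis using assms(2-4) by auto
qed

(* The simplex {x, y} is why the theorem needs k >= 1. *)
lemma waypoints_for_Cons_bridge:
  assumes "waypoints_for bs ws" "finite B" "x \<in> B" "ws \<noteq> []" "y \<in> hd ws" "B \<inter> hd ws = {}"
  shows "waypoints_for (B # bs) (B # {x} # {x, y} # {y} # ws)"
proof (rule waypoints_forI)
  note ws = waypoints_forD[OF assms(1)]
  have y: "y \<in> \<Union>(set bs)" using assms(5) Union_upper[OF hd_in_set[OF assms(4)]] ws(3) by (meson subsetD)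
  show "successively (\<lambda>W W'. W \<inter> W' \<noteq> {}) (B # {x} # {x, y} # {y} # ws)"
    using assms(3-5) ws(1) by (auto simp: successively_Cons)
  show "set (B # bs) - {{}} \<subseteq> set (B # {x} # {x, y} # {y} # ws)" using ws(2) by auto
  show "\<Union>(set (B # {x} # {x, y} # {y} # ws)) \<subseteq> \<Union>(set (B # bs))" using assms(3) y ws(3) by auto
  show "\<forall>W\<in>set (B # {x} # {x, y} # {y} # ws). W \<noteq> {} \<and> finite W \<and> (W \<in> set (B # bs) \<or> card W \<le> 2)"
    using assms(2,3) ws(4) by (auto simp: card_insert_if)
  fix A v assume c: "contiguous (A # B # bs) v"
  then have "contiguous (B # bs) v" by simp
  then have "contiguous (B # ws) v" by (rule ws(5))
  then have "contiguous (B # {x} # {x, y} # {y} # ws) v"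
    using assms(3,5,6) by (rule contiguous_bridge)
  moreover have "v \<in> A \<and> v \<in> \<Union>(set (B # {x} # {x, y} # {y} # ws)) \<longrightarrow> v \<in> B"
  proof -
    have "v \<in> A \<Longrightarrow> v \<in> B \<union> \<Union>(set bs) \<Longrightarrow> v \<in> B" using c by simp
    then show ?thesis using assms(3) y ws(3) by auto
  qed
  ultimately show "contiguous (A # B # {x} # {x, y} # {y} # ws) v"
    unfolding contiguous_Cons[of A] list.sel(1) by blast
qed

lemma waypoints_for_exists: "\<forall>B\<in>set bs. finite B \<Longrightarrow> \<exists>ws. waypoints_for bs ws"
proof (induction bs)
  case Nil
  show ?case using waypoints_for_Nil ..
next
  case (Cons B bs)
  have "finite B" "\<forall>B\<in>set bs. finite B" using Cons.prems by simp_all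
  then obtain ws where ws: "waypoints_for bs ws" using Cons.IH by blast
  have hd_ws: "hd ws \<noteq> {}" if "ws \<noteq> []"
    using waypoints_forD(4)[OF ws] that by simp
  consider "B = {}" | "B \<noteq> {}" "ws = [] \<or> B \<inter> hd ws \<noteq> {}" | "ws \<noteq> []" "B \<inter> hd ws = {}" "B \<noteq> {}"
    by auto
  then show ?case
  proof cases
    case 1
    have "waypoints_for ({} # bs) ws" using ws by (rule waypoints_for_Cons_empty)
    then show ?thesis unfolding 1 ..
  next
    case 2
    have "waypoints_for (B # bs) (B # ws)" using ws \<open>finite B\<close> 2 by (rule waypoints_for_Cons)
    then show ?thesis ..
  next
    case 3
    then obtain x y where "x \<in> B" "y \<in> hd ws" using hd_ws by (metis all_not_in_conv)
    then have "waypoints_for (B # bs) (B # {x} # {x, y} # {y} # ws)"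
      using ws \<open>finite B\<close> 3 by (intro waypoints_for_Cons_bridge)
    then show ?thesis ..
  qed
qed

lemma waypoints_for_singleton_Cons:
  assumes "waypoints_for bs ws" "\<forall>v. contiguous bs v" "\<Union>(set bs) \<noteq> {}"
  shows "\<exists>v\<^sub>0\<in>\<Union>(set bs). ws \<noteq> [] \<and> (\<forall>v. contiguous ({v\<^sub>0} # ws) v) \<and>
    successively (\<lambda>W W'. W \<inter> W' \<noteq> {}) ({v\<^sub>0} # ws)"
proof -
  note ws = waypoints_forD[OF assms(1)]
  obtain B where "B \<in> set bs" "B \<noteq> {}" using assms(3) by auto
  then have "ws \<noteq> []" using ws(2) by auto
  then have hd_in: "hd ws \<in> set ws" by simp
  then obtain v\<^sub>0 where v\<^sub>0: "v\<^sub>0 \<in> hd ws" using ws(4) by (metis all_not_in_conv)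
  have "contiguous ({} # ws) v" for v
    using assms(2) by (intro ws(5)) simp
  then have "\<forall>v. contiguous ({v\<^sub>0} # ws) v"
    using v\<^sub>0 by simp
  moreover have "successively (\<lambda>W W'. W \<inter> W' \<noteq> {}) ({v\<^sub>0} # ws)"
    using ws(1) v\<^sub>0 \<open>ws \<noteq> []\<close> by (auto simp: successively_Cons)
  moreover have "v\<^sub>0 \<in> \<Union>(set bs)" using v\<^sub>0 Union_upper[OF hd_in] ws(3) by (meson subsetD)
  ultimately show ?thesis using \<open>ws \<noteq> []\<close> by (intro bexI[of _ v\<^sub>0] conjI)
qed

lemma walk_through_bags:
  assumes "\<forall>B\<in>set bs. finite B" "\<forall>v. contiguous bs v" "\<Union>(set bs) \<noteq> {}"
  shows "\<exists>ss. ss \<noteq> [] \<and> card (hd ss) = 1 \<and> successively elementary_step ss \<and> (\<forall>v. contiguous ss v) \<and>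
    set bs - {{}} \<subseteq> set ss \<and>
    (\<forall>X\<in>set ss. X \<noteq> {} \<and> X \<subseteq> \<Union>(set bs) \<and> ((\<exists>B\<in>set bs. X \<subseteq> B) \<or> card X \<le> 2))"
proof -
  obtain ws where "waypoints_for bs ws" using waypoints_for_exists[OF assms(1)] ..
  note ws = waypoints_forD[OF this]
  obtain v\<^sub>0 where "v\<^sub>0 \<in> \<Union>(set bs)" and start: "ws \<noteq> [] \<and> (\<forall>v. contiguous ({v\<^sub>0} # ws) v) \<and>
      successively (\<lambda>W W'. W \<inter> W' \<noteq> {}) ({v\<^sub>0} # ws)"
    using waypoints_for_singleton_Cons[OF \<open>waypoints_for bs ws\<close> assms(2,3)] ..
  have "\<forall>W\<in>set ({v\<^sub>0} # ws). finite W" "{} \<notin> set ({v\<^sub>0} # ws)" using ws(4) by auto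
  then have "\<exists>ss. walk_between {v\<^sub>0} (last ws) ss \<and> set ({v\<^sub>0} # ws) \<subseteq> set ss \<and>
      (\<forall>v. contiguous ss v) \<and> (\<forall>X\<in>set ss. X \<noteq> {} \<and> (\<exists>W\<in>set ({v\<^sub>0} # ws). X \<subseteq> W))"
    using walk_through_waypoints[of "{v\<^sub>0} # ws"] start by simp
  then obtain ss where ss: "walk_between {v\<^sub>0} (last ws) ss" "set ({v\<^sub>0} # ws) \<subseteq> set ss"
      "\<forall>v. contiguous ss v" "\<forall>X\<in>set ss. X \<noteq> {} \<and> (\<exists>W\<in>set ({v\<^sub>0} # ws). X \<subseteq> W)"
    by (elim exE conjE)
  have bounded: "X \<subseteq> \<Union>(set bs) \<and> ((\<exists>B\<in>set bs. X \<subseteq> B) \<or> card X \<le> 2)" if "X \<in> set ss" for X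
  proof -
    have "\<exists>W\<in>set ({v\<^sub>0} # ws). X \<subseteq> W" using ss(4) that by simp
    then obtain W where W: "W \<in> set ({v\<^sub>0} # ws)" "X \<subseteq> W" ..
    have "W \<subseteq> \<Union>(set bs)" using W(1) ws(3) \<open>v\<^sub>0 \<in> \<Union>(set bs)\<close> by auto
    moreover have "W \<in> set bs \<or> (finite W \<and> card W \<le> 2)" using W(1) ws(4) by auto
    moreover have "card X \<le> card W" if "finite W" using W(2) that by (rule card_mono[rotated])
    ultimately show ?thesis using W(2) by auto
  qed
  show ?thesis
  proof (intro exI[of _ ss] conjI ballI)
    show "ss \<noteq> []" "card (hd ss) = 1" "successively elementary_step ss"
      using ss(1) by (simp_all add: walk_between_def)
    show "\<forall>v. contiguous ss v" by (rule ss(3))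
    show "set bs - {{}} \<subseteq> set ss" using ws(2) ss(2) by auto
    fix X assume "X \<in> set ss"
    then show "X \<noteq> {}" "X \<subseteq> \<Union>(set bs)" "(\<exists>B\<in>set bs. X \<subseteq> B) \<or> card X \<le> 2"
      using ss(4) bounded by simp_all
  qed
qed

definition entry_indices :: "'a set list \<Rightarrow> 'a \<Rightarrow> nat set" where
  "entry_indices xs v = {i. i < length xs \<and> v \<in> xs ! i \<and> (i = 0 \<or> v \<notin> xs ! (i - 1))}"

lemma entry_index_between:
  assumes "t \<le> u" "u < length xs" "v \<in> xs ! u" "t = 0 \<or> v \<notin> xs ! (t - 1)"
  shows "\<exists>i\<in>entry_indices xs v. t \<le> i \<and> i \<le> u"
  using assms
proof (induction u)
  case 0
  then show ?case by (auto simp: entry_indices_def)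
next
  case (Suc u)
  show ?case
  proof (cases "t \<le> u \<and> v \<in> xs ! u")
    case True
    with Suc.IH Suc.prems(2,4) obtain i where "i \<in> entry_indices xs v" "t \<le> i" "i \<le> u" by auto
    then show ?thesis by (intro bexI[of _ i]) auto
  next
    case False
    then have "v \<notin> xs ! u" using Suc.prems(1,4) by (auto simp: le_Suc_eq)
    then show ?thesis using Suc.prems by (intro bexI[of _ "Suc u"]) (auto simp: entry_indices_def)
  qed
qed

lemma card_entry_indices_eq_1_iff:
  "card (entry_indices xs v) = 1 \<longleftrightarrow> v \<in> \<Union>(set xs) \<and> contiguous xs v"
proof
  assume "card (entry_indices xs v) = 1"
  then obtain m where m: "entry_indices xs v = {m}" by (rule card_1_singletonE)
  then have "m < length xs" "v \<in> xs ! m" by (auto simp: entry_indices_def)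
  then have "v \<in> \<Union>(set xs)" using nth_mem by blast
  moreover have "contiguous xs v"
    unfolding contiguous_def
  proof (intro allI impI)
    fix s t u assume stu: "s \<le> t \<and> t \<le> u \<and> u < length xs \<and> v \<in> xs ! s \<and> v \<in> xs ! u"
    show "v \<in> xs ! t"
    proof (rule ccontr)
      assume gap: "v \<notin> xs ! t"
      obtain a where "a \<in> entry_indices xs v" "a \<le> s"
        using entry_index_between[of 0 s xs v] stu by auto
      moreover obtain b where "b \<in> entry_indices xs v" "t < b"
        using entry_index_between[of "Suc t" u xs v] stu gap by (cases "t = u") auto
      ultimately show False using m stu by auto
    qed
  qed
  ultimately show "v \<in> \<Union>(set xs) \<and> contiguous xs v" ..
next
  assume "v \<in> \<Union>(set xs) \<and> contiguous xs v"
  then obtain u where u: "u < length xs" "v \<in> xs ! u" and c: "contiguous xs v"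
    by (auto simp: in_set_conv_nth)
  obtain m where m: "m \<in> entry_indices xs v"
    using entry_index_between[of 0 u xs v] u by auto
  have "j \<le> i" if "i \<in> entry_indices xs v" "j \<in> entry_indices xs v" for i j
  proof (rule ccontr)
    assume "\<not> j \<le> i"
    then have "i \<le> j - 1" "j - 1 \<le> j" "j < length xs" "v \<in> xs ! i" "v \<in> xs ! j" "v \<notin> xs ! (j - 1)"
      using that by (auto simp: entry_indices_def)
    then show False using c unfolding contiguous_def by blast
  qed
  then have "entry_indices xs v = {m}" using m by (auto intro: antisym)
  then show "card (entry_indices xs v) = 1" by simp
qed

lemma simplicial_walk_iff:
  "simplicial_walk V k ss \<longleftrightarrow> ss \<noteq> [] \<and> (\<forall>X\<in>set ss. X \<noteq> {} \<and> X \<subseteq> V \<and> finite X \<and> card X \<le> k + 1) \<and>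
     card (hd ss) = 1 \<and> successively elementary_step ss"
proof -
  have "(\<forall>i. Suc i < length ss \<longrightarrow>
        (\<exists>u. (u \<notin> ss ! i \<and> ss ! Suc i = insert u (ss ! i)) \<or> (u \<notin> ss ! Suc i \<and> ss ! i = insert u (ss ! Suc i))))
      \<longleftrightarrow> successively elementary_step ss"
    unfolding successively_conv_nth elementary_step_def by blast
  then show ?thesis
    unfolding simplicial_walk_def by (auto simp: all_set_conv_all_nth hd_conv_nth)
qed

lemma incoming_iff_entry_index:
  assumes "simplicial_walk V k ss"
  shows "incoming ss i v \<longleftrightarrow> i \<in> entry_indices ss v"
proof (cases i)
  case 0
  have "card (ss ! 0) = 1" "ss \<noteq> []" using assms by (simp_all add: simplicial_walk_def)
  then show ?thesis using 0 by (auto simp: incoming_def entry_indices_def card_1_singleton_iff)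
next
  case (Suc j)
  have "elementary_step (ss ! j) (ss ! i)" if "i < length ss"
    using assms that Suc by (simp add: simplicial_walk_iff successively_conv_nth)
  then show ?thesis
    using Suc by (auto simp: incoming_def entry_indices_def elementary_step_def)
qed

lemma decomposing_iff:
  assumes "simplicial_walk V k ss"
  shows "decomposing V E ss \<longleftrightarrow>
    (\<forall>v\<in>V. v \<in> \<Union>(set ss) \<and> contiguous ss v) \<and> (\<forall>e\<in>E. \<exists>X\<in>set ss. e \<subseteq> X)"
proof -
  have entries: "{i. i < length ss \<and> incoming ss i v} = entry_indices ss v" for v
    using incoming_iff_entry_index[OF assms] by (auto simp: entry_indices_def)
  have edges: "(\<exists>i<length ss. e \<subseteq> ss ! i) \<longleftrightarrow> (\<exists>X\<in>set ss. e \<subseteq> X)" for e :: "'a set"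
    by (auto simp: set_conv_nth)
  show ?thesis
    unfolding decomposing_def entries edges card_entry_indices_eq_1_iff ..
qed

lemma path_decomposition_iff:
  "path_decomposition V E bs \<longleftrightarrow>
    bs \<noteq> [] \<and> \<Union>(set bs) = V \<and> (\<forall>e\<in>E. \<exists>B\<in>set bs. e \<subseteq> B) \<and> (\<forall>v. contiguous bs v)"
proof -
  have bags: "(\<forall>t<length bs. bs ! t \<subseteq> V) \<longleftrightarrow> \<Union>(set bs) \<subseteq> V"
    by (simp only: Sup_le_iff all_set_conv_all_nth)
  have cover: "(\<exists>t<length bs. x \<in> bs ! t) \<longleftrightarrow> x \<in> \<Union>(set bs)" for x
    by (auto simp: set_conv_nth)
  have edges: "(\<exists>t<length bs. e \<subseteq> bs ! t) \<longleftrightarrow> (\<exists>B\<in>set bs. e \<subseteq> B)" for e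
    by (auto simp: set_conv_nth)
  have "path_decomposition V E bs \<longleftrightarrow> bs \<noteq> [] \<and> \<Union>(set bs) \<subseteq> V \<and>
      (\<forall>e\<in>E. \<exists>B\<in>set bs. e \<subseteq> B) \<and> V \<subseteq> \<Union>(set bs) \<and> (\<forall>v\<in>V. contiguous bs v)"
    unfolding path_decomposition_def contiguous_def[symmetric] bags cover edges ball_conj_distrib
      subset_eq[of V]
    by (rule refl)
  moreover have "\<Union>(set bs) \<subseteq> V \<longrightarrow> (\<forall>v\<in>V. contiguous bs v) = (\<forall>v. contiguous bs v)"
    by (meson contiguous_if_not_mem subsetD)
  ultimately show ?thesis
    unfolding set_eq_subset by argo
qed

lemma path_decomposition_of_decomposing_walk:
  assumes "simplicial_walk V k ss" "decomposing V E ss"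
  shows "has_path_decomposition_of_width_le V E k"
proof -
  have walk: "ss \<noteq> []" "\<forall>X\<in>set ss. X \<noteq> {} \<and> X \<subseteq> V \<and> finite X \<and> card X \<le> k + 1"
    using assms(1) by (simp_all add: simplicial_walk_iff)
  have dec: "\<forall>v\<in>V. v \<in> \<Union>(set ss) \<and> contiguous ss v" "\<forall>e\<in>E. \<exists>X\<in>set ss. e \<subseteq> X"
    using assms(2) by (simp_all add: decomposing_iff[OF assms(1)])
  have "\<Union>(set ss) = V" using walk(2) dec(1) by auto
  moreover have "contiguous ss v" for v
    using dec(1) calculation contiguous_if_not_mem by (cases "v \<in> V") auto
  ultimately have "path_decomposition V E ss"
    using walk(1) dec(2) by (simp add: path_decomposition_iff)
  moreover have "\<forall>t<length ss. card (ss ! t) \<le> k + 1"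
    using walk(2) by (simp add: all_set_conv_all_nth)
  ultimately show ?thesis unfolding has_path_decomposition_of_width_le_def by blast
qed

lemma simplicial_walk_through_bags:
  assumes "\<forall>B\<in>set bs. finite B \<and> card B \<le> k + 1" "\<forall>v. contiguous bs v" "\<Union>(set bs) = V" "V \<noteq> {}" "1 \<le> k"
  shows "\<exists>ss. simplicial_walk V k ss \<and> (\<forall>v. contiguous ss v) \<and> set bs - {{}} \<subseteq> set ss"
proof -
  have "\<exists>ss. ss \<noteq> [] \<and> card (hd ss) = 1 \<and> successively elementary_step ss \<and> (\<forall>v. contiguous ss v) \<and>
      set bs - {{}} \<subseteq> set ss \<and>
      (\<forall>X\<in>set ss. X \<noteq> {} \<and> X \<subseteq> \<Union>(set bs) \<and> ((\<exists>B\<in>set bs. X \<subseteq> B) \<or> card X \<le> 2))"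
    using walk_through_bags[of bs] assms(1-4) by simp
  then obtain ss where ss: "ss \<noteq> []" "card (hd ss) = 1" "successively elementary_step ss"
      "\<forall>v. contiguous ss v" "set bs - {{}} \<subseteq> set ss"
      "\<forall>X\<in>set ss. X \<noteq> {} \<and> X \<subseteq> V \<and> ((\<exists>B\<in>set bs. X \<subseteq> B) \<or> card X \<le> 2)"
    unfolding assms(3) by (elim exE conjE)
  have "finite V"
    unfolding assms(3)[symmetric] using assms(1) by (intro finite_Union) auto
  have "finite X \<and> card X \<le> k + 1" if "X \<in> set ss" for X
  proof -
    have "finite X" using that ss(6) \<open>finite V\<close> by (meson finite_subset)
    moreover have "card X \<le> k + 1"
    proof (cases "\<exists>B\<in>set bs. X \<subseteq> B")
      case True
      then obtain B where "B \<in> set bs" "X \<subseteq> B" ..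
      then show ?thesis using assms(1) by (meson card_mono le_trans)
    next
      case False
      then show ?thesis using that ss(6) assms(5) by fastforce
    qed
    ultimately show ?thesis ..
  qed
  then have "simplicial_walk V k ss"
    using ss(1,2,3,6) by (simp add: simplicial_walk_iff)
  then show ?thesis using ss(4,5) by blast
qed

lemma decomposing_walk_of_path_decomposition:
  assumes "graph V E" "V \<noteq> {}" "1 \<le> k" "has_path_decomposition_of_width_le V E k"
  shows "\<exists>ss. simplicial_walk V k ss \<and> decomposing V E ss"
proof -
  obtain bs where pd: "path_decomposition V E bs" and width: "\<forall>t<length bs. card (bs ! t) \<le> k + 1"
    using assms(4) unfolding has_path_decomposition_of_width_le_def by blast
  then have bs: "\<Union>(set bs) = V" "\<forall>e\<in>E. \<exists>B\<in>set bs. e \<subseteq> B" "\<forall>v. contiguous bs v"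
    by (simp_all add: path_decomposition_iff)
  have "finite V" using assms(1) by (simp add: graph_def)
  then have "\<forall>B\<in>set bs. finite B"
    using bs(1) by (meson Union_upper finite_subset)
  moreover have "\<forall>B\<in>set bs. card B \<le> k + 1"
    using width by (simp add: all_set_conv_all_nth)
  ultimately obtain ss where ss: "simplicial_walk V k ss" "\<forall>v. contiguous ss v" "set bs - {{}} \<subseteq> set ss"
    using simplicial_walk_through_bags[of bs k V] bs(1,3) assms(2,3) by auto
  have "decomposing V E ss"
    unfolding decomposing_iff[OF ss(1)]
  proof (intro conjI ballI)
    fix v assume "v \<in> V"
    then obtain B where "B \<in> set bs" "v \<in> B" using bs(1) by auto
    then have "B \<in> set ss" using ss(3) by auto
    with \<open>v \<in> B\<close> show "v \<in> \<Union>(set ss)" by auto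
    show "contiguous ss v" using ss(2) ..
  next
    fix e assume "e \<in> E"
    then obtain B where "B \<in> set bs" "e \<subseteq> B" using bs(2) by auto
    moreover have "e \<noteq> {}" using \<open>e \<in> E\<close> assms(1) unfolding graph_def by fastforce
    ultimately have "B \<in> set ss" "e \<subseteq> B" using ss(3) by auto
    then show "\<exists>X\<in>set ss. e \<subseteq> X" ..
  qed
  then show ?thesis using ss(1) by blast
qed

theorem proposition4:
  fixes V :: "'a set" and E :: "'a set set" and k :: nat
  assumes "graph V E" and "V \<noteq> {}" and "k \<ge> 1"
  shows "has_path_decomposition_of_width_le V E k \<longleftrightarrow>
         (\<exists>ss. simplicial_walk V k ss \<and> decomposing V E ss)"
proof
  assume "has_path_decomposition_of_width_le V E k"
  then show "\<exists>ss. simplicial_walk V k ss \<and> decomposing V E ss"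
    by (rule decomposing_walk_of_path_decomposition[OF assms])
next
  assume "\<exists>ss. simplicial_walk V k ss \<and> decomposing V E ss"
  then show "has_path_decomposition_of_width_le V E k"
    using path_decomposition_of_decomposing_walk by blast
qed

end
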